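(* If $\mathcal{O}$ contains only Scott-open modalities, then for $R\subseteq X\times Y$: (1) if $R$ is reflexive (so $X=Y$), then for all $t,r\in TX$, $t\le r$ implies $t\,\mathcal{O}(R)\,r$; (2) for any ascending sequences $u_0\le u_1\le\dots$ in $TX$ and $v_0\le v_1\le\dots$ in $TY$, if $u_n\,\mathcal{O}(R)\,v_n$ for all $n$, then $(\bigsqcup_n u_n)\,\mathcal{O}(R)\,(\bigsqcup_n v_n)$.
   Context: $\Sigma$ is a signature of effect operations with arities $\alpha^n\to\alpha$, $\mathbf{N}\times\alpha^n\to\alpha$, $\alpha^{\mathbf{N}}\to\alpha$ or $\mathbf{N}\times\alpha^{\mathbf{N}}\to\alpha$. $TX$ is the set of possibly infinite labelled trees with leaves $\bot$ or elements of $X$ and internal nodes labelled by operations (or $\sigma_m$, $m\in\mathbb{N}$) with children according to arity; $t\le t'$ iff $t$ is obtained from $t'$ by replacing (possibly infinitely many) subtrees with $\bot$-leaves; this is an $\omega$-complete partial order with suprema $\bigsqcup$. $\mathbf{1}=\{*\}$. A set $\mathcal{O}$ of modalities is given with $[\![o]\!]\subseteq T\mathbf{1}$; $o$ is Scott-open if $[\![o]\!]$ is upward closed under $\le$ and whenever $t_1\le t_2\le\dots$ has $\bigsqcup_i t_i\in[\![o]\!]$, some $t_n\in[\![o]\!]$. $t[\in P]\in T\mathbf{1}$ replaces leaves in $P$ by $*$ and other $X$-leaves by $\bot$; $o(A)=\{t\in TX\mid t[\in A]\in[\![o]\!]\}$. $R[A]=\{y\mid\exists x\in A,\ xRy\}$;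 $\mathcal{O}$-relator: $t\,\mathcal{O}(R)\,t'$ iff $\forall A\subseteq X\ \forall o\in\mathcal{O}$, $t\in o(A)\Rightarrow t'\in o(R[A])$. *)

theory Defs
  imports Main
begin

text \<open>The labels 'l are the
  (parametrised) operation symbols of the signature: an operation of arity
  N x alpha^n contributes one label (op, m) for each m, etc.  The arity of a label
  is Some n (n children) or None (countably many children, indexed by nat).\<close>

datatype ('l, 'x) node = Bot | Leaf 'x | Node 'l

text \<open>A tree is represented by its map from positions (paths of child indices)
  to node contents; None means the position does not occur in the tree.\<close>

type_synonym ('l, 'x) tree = "nat list \<Rightarrow> ('l, 'x) node option"

definition child_ok :: "('l \<Rightarrow> nat option) \<Rightarrow> 'l \<Rightarrow> nat \<Rightarrow> bool" where
  "child_ok ar l i = (case ar l of None \<Rightarrow> True | Some n \<Rightarrow> i < n)"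

definition wf_tree :: "('l \<Rightarrow> nat option) \<Rightarrow> ('l, 'x) tree \<Rightarrow> bool" where
  "wf_tree ar t \<longleftrightarrow>
     t [] \<noteq> None \<and>
     (\<forall>p i. t (p @ [i]) \<noteq> None \<longleftrightarrow> (\<exists>l. t p = Some (Node l) \<and> child_ok ar l i))"

definition trees :: "('l \<Rightarrow> nat option) \<Rightarrow> ('l, 'x) tree set" where
  "trees ar = {t. wf_tree ar t}"

text \<open>t \<le> t': t is obtained from t' by replacing subtrees with bottom leaves.\<close>
definition tree_le :: "('l, 'x) tree \<Rightarrow> ('l, 'x) tree \<Rightarrow> bool" where
  "tree_le t t' \<longleftrightarrow> (\<forall>p v. t p = Some v \<longrightarrow> v = Bot \<or> t' p = Some v)"

definition is_tree_lub :: "('l \<Rightarrow> nat option) \<Rightarrow> (nat \<Rightarrow> ('l, 'x) tree) \<Rightarrow> ('l, 'x) tree \<Rightarrow> bool" where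
  "is_tree_lub ar us s \<longleftrightarrow> s \<in> trees ar \<and> (\<forall>n. tree_le (us n) s) \<and>
     (\<forall>s'\<in>trees ar. (\<forall>n. tree_le (us n) s') \<longrightarrow> tree_le s s')"

definition tree_sup :: "('l \<Rightarrow> nat option) \<Rightarrow> (nat \<Rightarrow> ('l, 'x) tree) \<Rightarrow> ('l, 'x) tree" where
  "tree_sup ar us = (THE s. is_tree_lub ar us s)"

definition tree_chain :: "('l \<Rightarrow> nat option) \<Rightarrow> (nat \<Rightarrow> ('l, 'x) tree) \<Rightarrow> bool" where
  "tree_chain ar us \<longleftrightarrow> (\<forall>n. us n \<in> trees ar) \<and> (\<forall>n. tree_le (us n) (us (Suc n)))"

definition scott_open :: "('l \<Rightarrow> nat option) \<Rightarrow> ('l, unit) tree set \<Rightarrow> bool" where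
  "scott_open ar S \<longleftrightarrow>
     (\<forall>t\<in>S. \<forall>t'\<in>trees ar. tree_le t t' \<longrightarrow> t' \<in> S) \<and>
     (\<forall>ts. tree_chain ar ts \<longrightarrow> tree_sup ar ts \<in> S \<longrightarrow> (\<exists>n. ts n \<in> S))"

definition mark :: "('l, 'x) tree \<Rightarrow> 'x set \<Rightarrow> ('l, unit) tree" where
  "mark t P = (\<lambda>p. map_option
      (\<lambda>v. case v of Bot \<Rightarrow> Bot | Leaf x \<Rightarrow> (if x \<in> P then Leaf () else Bot) | Node l \<Rightarrow> Node l)
      (t p))"

definition mod_set :: "('l \<Rightarrow> nat option) \<Rightarrow> ('o \<Rightarrow> ('l, unit) tree set) \<Rightarrow> 'o \<Rightarrow> 'x set
    \<Rightarrow> ('l, 'x) tree set" where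
  "mod_set ar sem m A = {t \<in> trees ar. mark t A \<in> sem m}"

definition relator :: "('l \<Rightarrow> nat option) \<Rightarrow> 'o set \<Rightarrow> ('o \<Rightarrow> ('l, unit) tree set)
    \<Rightarrow> ('x \<times> 'y) set \<Rightarrow> ('l, 'x) tree \<Rightarrow> ('l, 'y) tree \<Rightarrow> bool" where
  "relator ar Os sem R t t' \<longleftrightarrow>
     (\<forall>A. \<forall>m\<in>Os. t \<in> mod_set ar sem m A \<longrightarrow> t' \<in> mod_set ar sem m (R `` A))"

end

theory Submission
  imports Defs
begin

text \<open>For Scott-open o the sets o(A) inherit upward closure from [[o]], since marking is
  monotone in both the tree and the set A; and they are inaccessible by chains, since
  marking commutes with suprema of chains. The first gives (1) as R is reflexive, the second
  gives (2): if the supremum of u lies in o(A), then some u n does, so v n lies in o(R[A]),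
  and hence so does the larger supremum of v.\<close>

lemma tree_le_refl: "tree_le t t"
  unfolding tree_le_def by auto

lemma tree_le_trans: "tree_le t r \<Longrightarrow> tree_le r s \<Longrightarrow> tree_le t s"
  unfolding tree_le_def by metis

lemma tree_chain_mono:
  assumes "tree_chain ar u" "m \<le> n"
  shows "tree_le (u m) (u n)"
  using assms(2)
proof (induction n rule: dec_induct)
  case base
  then show ?case by (rule tree_le_refl)
next
  case (step n)
  then show ?case using assms(1) tree_le_trans unfolding tree_chain_def by blast
qed

lemma tree_le_position_defined:
  assumes "wf_tree ar t" "wf_tree ar r" "tree_le t r" "t p \<noteq> None"
  shows "r p \<noteq> None"
  using assms(4)
proof (induction p rule: rev_induct)
  case Nil
  then show ?case using assms(2) unfolding wf_tree_def by auto
next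
  case (snoc i p)
  then obtain l where l: "t p = Some (Node l)" "child_ok ar l i"
    using assms(1) unfolding wf_tree_def by blast
  then have "r p = Some (Node l)" using assms(3) unfolding tree_le_def by blast
  then show ?case using l assms(2) unfolding wf_tree_def by blast
qed

lemma tree_le_antisym:
  assumes "wf_tree ar t" "wf_tree ar r" "tree_le t r" "tree_le r t"
  shows "t = r"
proof
  fix p
  show "t p = r p"
  proof (cases "t p")
    case None
    then show ?thesis
      using tree_le_position_defined[OF assms(2,1,4), of p] by (cases "r p") auto
  next
    case (Some w)
    then obtain w' where "r p = Some w'"
      using tree_le_position_defined[OF assms(1,2,3), of p] by auto
    then show ?thesis using Some assms(3,4) unfolding tree_le_def by metis
  qed
qed

lemma tree_sup_eqI:
  assumes "is_tree_lub ar us s"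
  shows "tree_sup ar us = s"
  unfolding tree_sup_def
proof (rule the_equality)
  show "is_tree_lub ar us s" by fact
next
  fix s' assume "is_tree_lub ar us s'"
  then show "s' = s" using assms tree_le_antisym unfolding is_tree_lub_def trees_def by blast
qed

definition proper_node :: "('l, 'x) node option \<Rightarrow> bool" where
  "proper_node v \<longleftrightarrow> v \<noteq> None \<and> v \<noteq> Some Bot"

text \<open>Along a chain all proper entries at a position agree, so the choice below is
  immaterial; a position reached only by bottom leaves stays a bottom leaf.\<close>

definition chain_lub :: "(nat \<Rightarrow> ('l, 'x) tree) \<Rightarrow> ('l, 'x) tree" where
  "chain_lub u p =
     (if \<exists>n. proper_node (u n p) then u (SOME n. proper_node (u n p)) p
      else if \<exists>n. u n p \<noteq> None then Some Bot else None)"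

lemma tree_chain_proper_eq:
  assumes "tree_chain ar u" "proper_node (u m p)" "proper_node (u n p)"
  shows "u m p = u n p"
proof (cases "m \<le> n")
  case True
  then show ?thesis
    using tree_chain_mono[OF assms(1) True] assms(2) unfolding tree_le_def proper_node_def by force
next
  case False
  then have "n \<le> m" by simp
  then show ?thesis
    using tree_chain_mono[OF assms(1) \<open>n \<le> m\<close>] assms(3) unfolding tree_le_def proper_node_def by force
qed

lemma chain_lub_proper:
  assumes "tree_chain ar u" "proper_node (u n p)"
  shows "chain_lub u p = u n p"
proof -
  have "proper_node (u (SOME n. proper_node (u n p)) p)" using assms(2) by (metis someI)
  then show ?thesis unfolding chain_lub_def using assms tree_chain_proper_eq by metis
qed

lemma chain_lub_SomeD:
  assumes "tree_chain ar u" "chain_lub u p = Some w"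
  shows "(w \<noteq> Bot \<and> (\<exists>n. u n p = Some w)) \<or> (w = Bot \<and> (\<exists>n. u n p \<noteq> None))"
proof (cases "\<exists>n. proper_node (u n p)")
  case True
  then obtain n where n: "proper_node (u n p)" by blast
  then have "chain_lub u p = u n p" using chain_lub_proper assms(1) by blast
  then show ?thesis using n assms(2) unfolding proper_node_def by auto
next
  case False
  then show ?thesis using assms(2) unfolding chain_lub_def by (auto split: if_splits)
qed

lemma chain_lub_None_iff: "chain_lub u p = None \<longleftrightarrow> (\<forall>n. u n p = None)"
proof (cases "\<exists>n. proper_node (u n p)")
  case True
  then have "proper_node (u (SOME n. proper_node (u n p)) p)" by (metis someI)
  then show ?thesis using True unfolding chain_lub_def proper_node_def by auto
next
  case False
  then show ?thesis unfolding chain_lub_def by auto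
qed

lemma chain_lub_Node_iff:
  assumes "tree_chain ar u"
  shows "chain_lub u p = Some (Node l) \<longleftrightarrow> (\<exists>n. u n p = Some (Node l))"
proof
  assume "chain_lub u p = Some (Node l)"
  then show "\<exists>n. u n p = Some (Node l)" using chain_lub_SomeD[OF assms] by blast
next
  assume "\<exists>n. u n p = Some (Node l)"
  then obtain n where "u n p = Some (Node l)" by blast
  moreover from this have "proper_node (u n p)" unfolding proper_node_def by auto
  ultimately show "chain_lub u p = Some (Node l)" using chain_lub_proper[OF assms] by metis
qed

lemma chain_lub_is_tree_lub:
  assumes ch: "tree_chain ar u"
  shows "is_tree_lub ar u (chain_lub u)"
proof -
  have wf: "\<And>n. wf_tree ar (u n)" using ch unfolding tree_chain_def trees_def by blast
  have "wf_tree ar (chain_lub u)"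
    unfolding wf_tree_def
  proof (intro conjI allI)
    show "chain_lub u [] \<noteq> None" using wf[of 0] unfolding chain_lub_None_iff wf_tree_def by auto
  next
    fix p i
    have "chain_lub u (p @ [i]) \<noteq> None \<longleftrightarrow> (\<exists>n. u n (p @ [i]) \<noteq> None)"
      using chain_lub_None_iff by metis
    also have "\<dots> \<longleftrightarrow> (\<exists>n l. u n p = Some (Node l) \<and> child_ok ar l i)"
      using wf unfolding wf_tree_def by blast
    also have "\<dots> \<longleftrightarrow> (\<exists>l. chain_lub u p = Some (Node l) \<and> child_ok ar l i)"
      using chain_lub_Node_iff[OF ch] by blast
    finally show "chain_lub u (p @ [i]) \<noteq> None \<longleftrightarrow>
        (\<exists>l. chain_lub u p = Some (Node l) \<and> child_ok ar l i)" .
  qed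
  moreover have "tree_le (u n) (chain_lub u)" for n
    unfolding tree_le_def
  proof (intro allI impI)
    fix p v assume "u n p = Some v"
    then show "v = Bot \<or> chain_lub u p = Some v"
      using chain_lub_proper[OF ch, of n p] unfolding proper_node_def by auto
  qed
  moreover have "tree_le (chain_lub u) s" if ub: "\<forall>n. tree_le (u n) s" for s
    unfolding tree_le_def
  proof (intro allI impI)
    fix p w assume "chain_lub u p = Some w"
    then consider "w = Bot" | n where "u n p = Some w"
      using chain_lub_SomeD[OF ch] by blast
    then show "w = Bot \<or> s p = Some w"
      using ub unfolding tree_le_def by cases blast+
  qed
  ultimately show ?thesis unfolding is_tree_lub_def trees_def by blast
qed

lemma tree_sup_eq_chain_lub: "tree_chain ar u \<Longrightarrow> tree_sup ar u = chain_lub u"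
  by (rule tree_sup_eqI[OF chain_lub_is_tree_lub])

lemma tree_sup_is_tree_lub: "tree_chain ar u \<Longrightarrow> is_tree_lub ar u (tree_sup ar u)"
  by (simp add: tree_sup_eq_chain_lub chain_lub_is_tree_lub)

definition mark_node :: "'x set \<Rightarrow> ('l, 'x) node \<Rightarrow> ('l, unit) node" where
  "mark_node P v =
     (case v of Bot \<Rightarrow> Bot | Leaf x \<Rightarrow> (if x \<in> P then Leaf () else Bot) | Node l \<Rightarrow> Node l)"

lemma mark_apply: "mark t P p = map_option (mark_node P) (t p)"
  unfolding mark_def mark_node_def by simp

lemma mark_node_eq_Node_iff: "mark_node P w = Node l \<longleftrightarrow> w = Node l"
  unfolding mark_node_def by (auto split: node.splits)

lemma mark_in_trees: "t \<in> trees ar \<Longrightarrow> mark t P \<in> trees ar"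
  unfolding trees_def wf_tree_def mark_apply
  by (simp add: mark_node_eq_Node_iff)

lemma mark_mono:
  assumes "tree_le t r" "P \<subseteq> Q"
  shows "tree_le (mark t P) (mark r Q)"
  unfolding tree_le_def mark_apply
proof (intro allI impI)
  fix p v assume "map_option (mark_node P) (t p) = Some v"
  then obtain w where w: "t p = Some w" "v = mark_node P w" by auto
  then have "w = Bot \<or> r p = Some w" using assms(1) unfolding tree_le_def by blast
  then show "v = Bot \<or> map_option (mark_node Q) (r p) = Some v"
    using w assms(2) unfolding mark_node_def by (auto split: node.splits)
qed

lemma tree_chain_mark: "tree_chain ar u \<Longrightarrow> tree_chain ar (\<lambda>n. mark (u n) P)"
  unfolding tree_chain_def by (simp add: mark_in_trees mark_mono)

lemma tree_sup_mark:
  assumes ch: "tree_chain ar u"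
  shows "tree_sup ar (\<lambda>n. mark (u n) P) = mark (tree_sup ar u) P"
proof (rule tree_sup_eqI)
  have lub: "is_tree_lub ar u (chain_lub u)" by (rule chain_lub_is_tree_lub[OF ch])
  show "is_tree_lub ar (\<lambda>n. mark (u n) P) (mark (tree_sup ar u) P)"
    unfolding tree_sup_eq_chain_lub[OF ch] is_tree_lub_def
  proof (intro conjI ballI allI impI)
    show "mark (chain_lub u) P \<in> trees ar" using lub mark_in_trees unfolding is_tree_lub_def by blast
  next
    fix n show "tree_le (mark (u n) P) (mark (chain_lub u) P)"
      using lub mark_mono unfolding is_tree_lub_def by blast
  next
    fix s assume ub: "\<forall>n. tree_le (mark (u n) P) s"
    show "tree_le (mark (chain_lub u) P) s"
      unfolding tree_le_def
    proof (intro allI impI)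
      fix p v assume "mark (chain_lub u) P p = Some v"
      then obtain w where w: "chain_lub u p = Some w" "v = mark_node P w"
        unfolding mark_apply by auto
      show "v = Bot \<or> s p = Some v"
      proof (cases "w = Bot")
        case True
        then show ?thesis using w unfolding mark_node_def by simp
      next
        case False
        then obtain n where "u n p = Some w" using chain_lub_SomeD[OF ch w(1)] by blast
        then have "mark (u n) P p = Some v" using w unfolding mark_apply by simp
        then show ?thesis using ub unfolding tree_le_def by blast
      qed
    qed
  qed
qed

lemma mod_set_mono:
  assumes "scott_open ar (sem m)" "t \<in> mod_set ar sem m A"
    and "r \<in> trees ar" "tree_le t r" "A \<subseteq> B"
  shows "r \<in> mod_set ar sem m B"
proof -
  have "mark t A \<in> sem m" using assms(2) unfolding mod_set_def by auto
  moreover have "tree_le (mark t A) (mark r B)" using mark_mono assms(4,5) by blast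
  ultimately have "mark r B \<in> sem m"
    using assms(1) mark_in_trees[OF assms(3)] unfolding scott_open_def by blast
  then show ?thesis using assms(3) unfolding mod_set_def by auto
qed

lemma mod_set_tree_sup_inaccessible:
  assumes "scott_open ar (sem m)" "tree_chain ar u" "tree_sup ar u \<in> mod_set ar sem m A"
  obtains n where "u n \<in> mod_set ar sem m A"
proof -
  have "tree_sup ar (\<lambda>n. mark (u n) A) \<in> sem m"
    using assms(3) tree_sup_mark[OF assms(2)] unfolding mod_set_def by auto
  then obtain n where "mark (u n) A \<in> sem m"
    using assms(1) tree_chain_mark[OF assms(2)] unfolding scott_open_def by blast
  moreover have "u n \<in> trees ar" using assms(2) unfolding tree_chain_def by blast
  ultimately show thesis using that unfolding mod_set_def by auto
qed

theorem lemma5p9: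
  fixes ar :: "'l \<Rightarrow> nat option"
    and Os :: "'o set"
    and sem :: "'o \<Rightarrow> ('l, unit) tree set"
  assumes sem_T1: "\<forall>m\<in>Os. sem m \<subseteq> trees ar"
    and scott: "\<forall>m\<in>Os. scott_open ar (sem m)"
  shows "(\<forall>(R :: ('x \<times> 'x) set). refl R \<longrightarrow>
            (\<forall>t\<in>trees ar. \<forall>r\<in>trees ar. tree_le t r \<longrightarrow> relator ar Os sem R t r))
       \<and> (\<forall>(R :: ('x \<times> 'y) set) (u :: nat \<Rightarrow> ('l, 'x) tree) (v :: nat \<Rightarrow> ('l, 'y) tree).
            tree_chain ar u \<longrightarrow> tree_chain ar v \<longrightarrow> (\<forall>n. relator ar Os sem R (u n) (v n)) \<longrightarrow>
            relator ar Os sem R (tree_sup ar u) (tree_sup ar v))"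
proof (intro conjI allI impI ballI)
  fix R :: "('x \<times> 'x) set" and t r :: "('l, 'x) tree"
  assume "refl R" and r: "r \<in> trees ar" and le: "tree_le t r"
  show "relator ar Os sem R t r"
    unfolding relator_def
  proof (intro allI ballI impI)
    fix A m assume "m \<in> Os" and t: "t \<in> mod_set ar sem m A"
    moreover have "A \<subseteq> R `` A" using \<open>refl R\<close> unfolding refl_on_def by blast
    ultimately show "r \<in> mod_set ar sem m (R `` A)"
      using mod_set_mono[OF _ t r le] scott by blast
  qed
next
  fix R :: "('x \<times> 'y) set" and u :: "nat \<Rightarrow> ('l, 'x) tree" and v :: "nat \<Rightarrow> ('l, 'y) tree"
  assume u: "tree_chain ar u" and v: "tree_chain ar v"
    and rel: "\<forall>n. relator ar Os sem R (u n) (v n)"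
  show "relator ar Os sem R (tree_sup ar u) (tree_sup ar v)"
    unfolding relator_def
  proof (intro allI ballI impI)
    fix A m assume "m \<in> Os" and sup_u: "tree_sup ar u \<in> mod_set ar sem m A"
    then have open_m: "scott_open ar (sem m)" using scott by blast
    obtain n where "u n \<in> mod_set ar sem m A"
      using mod_set_tree_sup_inaccessible[OF open_m u sup_u] .
    then have "v n \<in> mod_set ar sem m (R `` A)" using rel \<open>m \<in> Os\<close> unfolding relator_def by blast
    moreover have "tree_sup ar v \<in> trees ar" "tree_le (v n) (tree_sup ar v)"
      using tree_sup_is_tree_lub[OF v] unfolding is_tree_lub_def by auto
    ultimately show "tree_sup ar v \<in> mod_set ar sem m (R `` A)"
      using mod_set_mono[where sem = sem, OF open_m] by blast
  qed
qed

end
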